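(* Let $h$ be an isometry of the $E_8$ lattice of order $5$ which does not have $1$ as an eigenvalue. Then the lattice $(h-1)E_8$ is rootless.
   Context: $E_8$ is the $E_8$ root lattice; rootless means containing no vectors of norm $2$. *)

theory Defs
  imports "HOL-Analysis.Analysis"
begin

definition E8 :: "(real^8) set" where
  "E8 = {x. ((\<forall>i. x $ i \<in> \<int>) \<or> (\<forall>i. x $ i - 1/2 \<in> \<int>))
            \<and> (\<exists>k::int. (\<Sum>i\<in>UNIV. x $ i) = 2 * of_int k)}"

definition lattice_isometry :: "(real^8) set \<Rightarrow> real^8^8 \<Rightarrow> bool" where
  "lattice_isometry L h \<longleftrightarrow> orthogonal_matrix h \<and> (\<lambda>x. h *v x) ` L = L"

definition has_order :: "real^8^8 \<Rightarrow> nat \<Rightarrow> bool" where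
  "has_order h n \<longleftrightarrow> 0 < n \<and> ((\<lambda>x. h *v x) ^^ n) = id
      \<and> (\<forall>k. 0 < k \<and> k < n \<longrightarrow> ((\<lambda>x. h *v x) ^^ k) \<noteq> id)"

definition has_eigenvalue :: "real^8^8 \<Rightarrow> real \<Rightarrow> bool" where
  "has_eigenvalue h c \<longleftrightarrow> (\<exists>v. v \<noteq> 0 \<and> h *v v = c *\<^sub>R v)"

definition rootless :: "(real^8) set \<Rightarrow> bool" where
  "rootless L \<longleftrightarrow> (\<forall>x\<in>L. x \<bullet> x \<noteq> 2)"

end

theory Submission
  imports Defs
begin

text \<open>Let \<open>H\<close> be an orthogonal map with \<open>H\<^sup>5 = 1\<close> and no nonzero fixed vector. Then
  \<open>x + Hx + H\<^sup>2x + H\<^sup>3x + H\<^sup>4x\<close> is fixed, hence zero, and pairing it with \<open>x\<close> gives the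
  identity \<open>|Hx - x|\<^sup>2 = |x|\<^sup>2 + |x + H\<^sup>2x|\<^sup>2\<close>. The last term vanishes only if \<open>H\<^sup>2x = -x\<close>,
  which forces \<open>H\<^sup>4x = x\<close> and so \<open>Hx = x\<close>. Hence \<open>0 < |x|\<^sup>2 < |Hx - x|\<^sup>2\<close> for \<open>x \<noteq> 0\<close>.
  A root \<open>Hx - x\<close> of \<open>(h - 1)E\<^sub>8\<close> would thus give \<open>0 < |x|\<^sup>2 < 2\<close>, impossible since \<open>E\<^sub>8\<close> is even.\<close>

lemma E8_inner_self_even:
  assumes "x \<in> E8"
  shows "\<exists>m::int. x \<bullet> x = 2 * of_int m"
proof -
  from assms obtain K :: int where K: "(\<Sum>i\<in>UNIV. x $ i) = 2 * of_int K"
    and coords: "(\<forall>i. x $ i \<in> \<int>) \<or> (\<forall>i. x $ i - 1/2 \<in> \<int>)"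
    unfolding E8_def by blast
  have inner_x: "x \<bullet> x = (\<Sum>i\<in>UNIV. x $ i * x $ i)"
    by (simp add: inner_vec_def)
  from coords show ?thesis
  proof
    assume integral: "\<forall>i. x $ i \<in> \<int>"
    define k where "k i = \<lfloor>x $ i\<rfloor>" for i
    have xk: "x $ i = of_int (k i)" for i
      using integral unfolding k_def by (metis Ints_cases floor_of_int)
    have "of_int (\<Sum>i\<in>UNIV. k i) = (2 * of_int K :: real)"
      using K by (simp add: xk)
    hence sum_k: "(\<Sum>i\<in>UNIV. k i) = 2 * K" by linarith
    have "even (\<Sum>i\<in>UNIV. k i * (k i - 1))" by (rule dvd_sum) simp
    moreover have "(\<Sum>i\<in>UNIV. k i * k i) = (\<Sum>i\<in>UNIV. k i * (k i - 1)) + (\<Sum>i\<in>UNIV. k i)"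
      by (simp add: algebra_simps sum_subtractf)
    ultimately have "even (\<Sum>i\<in>UNIV. k i * k i)" using sum_k by simp
    then obtain m where m: "(\<Sum>i\<in>UNIV. k i * k i) = 2 * m" by blast
    have "x \<bullet> x = of_int (\<Sum>i\<in>UNIV. k i * k i)" using inner_x by (simp add: xk)
    thus ?thesis using m by auto
  next
    assume half_integral: "\<forall>i. x $ i - 1/2 \<in> \<int>"
    define k where "k i = \<lfloor>x $ i - 1/2\<rfloor>" for i
    have "x $ i - 1/2 = of_int (k i)" for i
      using half_integral unfolding k_def by (metis Ints_cases floor_of_int)
    hence xk: "x $ i = of_int (k i) + 1/2" for i by (simp add: algebra_simps)
    have "even (\<Sum>i\<in>UNIV. k i * (k i + 1))" by (rule dvd_sum) simp
    then obtain m where m: "(\<Sum>i\<in>UNIV. k i * (k i + 1)) = 2 * m" by blast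
    have "x \<bullet> x = (\<Sum>i\<in>UNIV. of_int (k i * (k i + 1)) + 1/4)"
      unfolding inner_x xk by (rule sum.cong) (auto simp: algebra_simps)
    also have "\<dots> = of_int (\<Sum>i\<in>UNIV. k i * (k i + 1)) + 2"
      by (simp add: sum.distrib)
    finally have "x \<bullet> x = 2 * of_int (m + 1)" using m by simp
    thus ?thesis by blast
  qed
qed

context
  fixes H :: "'a::real_inner \<Rightarrow> 'a"
  assumes orthogonal: "orthogonal_transformation H"
    and funpow_5: "H ^^ 5 = id"
    and fixed_zero: "\<And>v. H v = v \<Longrightarrow> v = 0"
begin

private lemma inner_H [simp]: "H u \<bullet> H v = u \<bullet> v"
  using orthogonal unfolding orthogonal_transformation_def by blast

private lemma linear_H: "linear H"
  using orthogonal unfolding orthogonal_transformation_def by blast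

private lemma H_5 [simp]: "H (H (H (H (H u)))) = u"
proof -
  have "(H ^^ 5) u = u" using funpow_5 by simp
  thus ?thesis by (simp add: eval_nat_numeral)
qed

lemma order5_inner_orbit_sum:
  "x \<bullet> x + 2 * (x \<bullet> H x) + 2 * (x \<bullet> H (H x)) = 0"
proof -
  define s where "s = x + H x + H (H x) + H (H (H x)) + H (H (H (H x)))"
  have "H s = s"
    unfolding s_def by (simp add: linear_add[OF linear_H] algebra_simps)
  hence "s = 0" by (rule fixed_zero)
  have inner_4: "x \<bullet> H (H (H (H x))) = x \<bullet> H x"
    using inner_H[of x "H (H (H (H x)))"] by (simp add: inner_commute)
  have inner_3: "x \<bullet> H (H (H x)) = x \<bullet> H (H x)"
    using inner_H[of "H x" "H (H (H (H x)))"] inner_H[of x "H (H (H x))"]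
    by (simp add: inner_commute)
  have "0 = x \<bullet> s" using \<open>s = 0\<close> by simp
  also have "\<dots> = x \<bullet> x + 2 * (x \<bullet> H x) + 2 * (x \<bullet> H (H x))"
    unfolding s_def by (simp add: inner_add_right inner_3 inner_4)
  finally show ?thesis by simp
qed

lemma order5_inner_diff:
  "(H x - x) \<bullet> (H x - x) = x \<bullet> x + (x + H (H x)) \<bullet> (x + H (H x))"
  using order5_inner_orbit_sum[of x]
  by (simp add: inner_diff_left inner_diff_right inner_add_left inner_add_right inner_commute)

lemma order5_inner_self_less_inner_diff:
  assumes "x \<noteq> 0"
  shows "x \<bullet> x < (H x - x) \<bullet> (H x - x)"
proof -
  have "x + H (H x) \<noteq> 0"
  proof
    assume "x + H (H x) = 0"
    hence "H (H x) = - x" by (simp add: add_eq_0_iff)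
    hence "H (H (H (H x))) = x" by (simp add: linear_neg[OF linear_H])
    hence "H x = x" using H_5[of x] by simp
    with assms fixed_zero show False by blast
  qed
  thus ?thesis by (simp add: order5_inner_diff)
qed

end

theorem lemmaC2:
  fixes h :: "real^8^8"
  assumes "lattice_isometry E8 h"
    and "has_order h 5"
    and "\<not> has_eigenvalue h 1"
  shows "rootless ((\<lambda>x. h *v x - x) ` E8)"
  unfolding rootless_def
proof
  let ?H = "\<lambda>x::real^8. h *v x"
  have orthogonal: "orthogonal_transformation ?H"
    using assms(1) unfolding lattice_isometry_def orthogonal_transformation_matrix
    by (simp add: matrix_vector_mul_linear matrix_of_matrix_vector_mul)
  have funpow_5: "?H ^^ 5 = id" using assms(2) unfolding has_order_def by blast
  have fixed_zero: "?H v = v \<Longrightarrow> v = 0" for v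
    using assms(3) unfolding has_eigenvalue_def by auto
  fix r assume "r \<in> (\<lambda>x. h *v x - x) ` E8"
  then obtain x where "x \<in> E8" and r: "r = ?H x - x" by blast
  show "r \<bullet> r \<noteq> 2"
  proof (cases "x = 0")
    case True
    then show ?thesis using r by simp
  next
    case False
    have "0 < x \<bullet> x" using False by simp
    moreover have "x \<bullet> x < r \<bullet> r"
      unfolding r
      using order5_inner_self_less_inner_diff[OF orthogonal funpow_5 fixed_zero False] .
    moreover obtain m :: int where "x \<bullet> x = 2 * of_int m"
      using E8_inner_self_even[OF \<open>x \<in> E8\<close>] by blast
    ultimately have "r \<bullet> r = 2 \<Longrightarrow> 0 < m \<and> m < 1" by simp
    then show ?thesis by linarith
  qed
qed

end
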